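(* Let $n\ge 5$ and let $\mathcal{H}$ be a Berge-$K_4$-saturated $3$-graph on $n$ vertices. (i) If $u,v\in V(\mathcal{H})$ are distinct and $(u,v)$ is good, then for every witness (distinct vertices $x,y\notin\{u,v\}$ and distinct hyperedges $e_{ux},e_{uy},e_{vx},e_{vy},e_{xy}$ containing the respective pairs) every hyperedge of $\mathcal{H}$ containing both $u$ and $v$ is among $e_{ux},e_{uy},e_{vx},e_{vy},e_{xy}$. Moreover, $d_{\mathcal{H}}(u,v)\le 2$ and $d_{\mathcal{H}}(w)\ge 3$ for every $w\in N_{\mathcal{H}}(u,v)$. (ii) Let $v_1v_2v_3\in E(\mathcal{H})$ with $d_{\mathcal{H}}(v_1)\le d_{\mathcal{H}}(v_2)\le d_{\mathcal{H}}(v_3)$. If $d_{\mathcal{H}}(v_1)\le 2$, then $(v_2,v_3)$ is bad. If $d_{\mathcal{H}}(v_1)\le d_{\mathcal{H}}(v_2)\le 2$, then $(v_1,v_2)$, $(v_1,v_3)$ and $(v_2,v_3)$ are bad. If $d_{\mathcal{H}}(v_1)\le d_{\mathcal{H}}(v_2)\le d_{\mathcal{H}}(v_3)\le 2$, then $(v_1,u)$, $(v_2,u)$ and $(v_3,u)$ are bad for every $u\in V(\mathcal{H})\setminus\{v_1,v_2,v_3\}$.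
   Context: A $3$-graph has all hyperedges of size $3$. A $3$-graph contains a Berge-$K_4$ if there are $4$ distinct vertices and $6$ distinct hyperedges, one containing each of the $6$ pairs of these vertices. $\mathcal{H}$ is Berge-$K_4$-saturated if it contains no Berge-$K_4$ but adding any $3$-set not already a hyperedge creates a Berge-$K_4$. For distinct vertices $u,v$, the pair $(u,v)$ is good if adding the new edge $\{u,v\}$ creates a Berge-$K_4$, i.e. there exist distinct vertices $x,y\notin\{u,v\}$ and five distinct hyperedges $e_{ux},e_{uy},e_{vx},e_{vy},e_{xy}$ of $\mathcal{H}$ with $e_{ab}\supseteq\{a,b\}$; otherwise $(u,v)$ is bad. $d_{\mathcal{H}}(w)$ is the number of hyperedges containing $w$; $N_{\mathcal{H}}(u,v)=\{w: uvw\in E(\mathcal{H})\}$ and $d_{\mathcal{H}}(u,v)=|N_{\mathcal{H}}(u,v)|$. *)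

theory Defs
  imports Main
begin

definition uniform3 :: "'a set \<Rightarrow> 'a set set \<Rightarrow> bool" where
  "uniform3 V E \<longleftrightarrow> (\<forall>e\<in>E. e \<subseteq> V \<and> card e = 3)"

definition berge_K4 :: "'a set set \<Rightarrow> bool" where
  "berge_K4 E \<longleftrightarrow> (\<exists>a b c d eab eac ead ebc ebd ecd.
     distinct [a, b, c, d] \<and> distinct [eab, eac, ead, ebc, ebd, ecd] \<and>
     eab \<in> E \<and> eac \<in> E \<and> ead \<in> E \<and> ebc \<in> E \<and> ebd \<in> E \<and> ecd \<in> E \<and>
     {a, b} \<subseteq> eab \<and> {a, c} \<subseteq> eac \<and> {a, d} \<subseteq> ead \<and>
     {b, c} \<subseteq> ebc \<and> {b, d} \<subseteq> ebd \<and> {c, d} \<subseteq> ecd)"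

definition berge_K4_saturated :: "'a set \<Rightarrow> 'a set set \<Rightarrow> bool" where
  "berge_K4_saturated V E \<longleftrightarrow> uniform3 V E \<and> \<not> berge_K4 E \<and>
     (\<forall>T. T \<subseteq> V \<and> card T = 3 \<and> T \<notin> E \<longrightarrow> berge_K4 (insert T E))"

definition good_witness :: "'a set set \<Rightarrow> 'a \<Rightarrow> 'a \<Rightarrow> 'a \<Rightarrow> 'a \<Rightarrow>
    'a set \<Rightarrow> 'a set \<Rightarrow> 'a set \<Rightarrow> 'a set \<Rightarrow> 'a set \<Rightarrow> bool" where
  "good_witness E u v x y eux euy evx evy exy \<longleftrightarrow>
     x \<noteq> y \<and> x \<notin> {u, v} \<and> y \<notin> {u, v} \<and>
     distinct [eux, euy, evx, evy, exy] \<and>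
     eux \<in> E \<and> euy \<in> E \<and> evx \<in> E \<and> evy \<in> E \<and> exy \<in> E \<and>
     {u, x} \<subseteq> eux \<and> {u, y} \<subseteq> euy \<and> {v, x} \<subseteq> evx \<and> {v, y} \<subseteq> evy \<and> {x, y} \<subseteq> exy"

definition good_pair :: "'a set set \<Rightarrow> 'a \<Rightarrow> 'a \<Rightarrow> bool" where
  "good_pair E u v \<longleftrightarrow> (\<exists>x y eux euy evx evy exy. good_witness E u v x y eux euy evx evy exy)"

definition deg :: "'a set set \<Rightarrow> 'a \<Rightarrow> nat" where
  "deg E w = card {e \<in> E. w \<in> e}"

definition codeg_nbhd :: "'a set set \<Rightarrow> 'a \<Rightarrow> 'a \<Rightarrow> 'a set" where
  "codeg_nbhd E u v = {w. {u, v, w} \<in> E}"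

definition codeg :: "'a set set \<Rightarrow> 'a \<Rightarrow> 'a \<Rightarrow> nat" where
  "codeg E u v = card (codeg_nbhd E u v)"

end

theory Submission
  imports Defs
begin

text \<open>
  A witness for a good pair (u, v) is a Berge-K4 on u, v, x, y lacking only its edge for the
  pair {u, v}. So in a Berge-K4-free 3-graph every hyperedge through u and v is one of the five
  witness edges, hence its third vertex is x or y, and x and y each lie in three witness edges.
  A vertex of degree at most 2 in a good pair has its two witness edges as its only edges, so
  each of its edges meets {x, y}; and two such vertices of one good pair share no edge, since
  their witness edges are distinct.
\<close>

lemma three_le_deg:
  assumes "finite E" "{a, b, c} \<subseteq> E" "distinct [a, b, c]" "w \<in> a" "w \<in> b" "w \<in> c"
  shows "3 \<le> deg E w"
proof -
  have "card {a, b, c} \<le> card {e \<in> E. w \<in> e}"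
    using assms by (intro card_mono) auto
  then show ?thesis
    using assms(3) by (simp add: deg_def)
qed

lemma edge_through_vertex_of_deg_le_2:
  assumes "finite E" "deg E w \<le> 2" "a \<in> E" "b \<in> E" "a \<noteq> b" "w \<in> a" "w \<in> b"
    and "e \<in> E" "w \<in> e"
  shows "e = a \<or> e = b"
  using three_le_deg[of E a b e w] assms by fastforce

lemma good_witness_deg_ge_3:
  assumes "finite E" "good_witness E u v x y eux euy evx evy exy"
  shows "3 \<le> deg E x" "3 \<le> deg E y"
  using assms three_le_deg[of E eux evx exy x] three_le_deg[of E euy evy exy y]
  by (auto simp: good_witness_def)

lemma berge_K4I:
  assumes "distinct [a, b, c, d]" "distinct [eab, eac, ead, ebc, ebd, ecd]"
    and "eab \<in> E" "eac \<in> E" "ead \<in> E" "ebc \<in> E" "ebd \<in> E" "ecd \<in> E"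
    and "{a, b} \<subseteq> eab" "{a, c} \<subseteq> eac" "{a, d} \<subseteq> ead"
    and "{b, c} \<subseteq> ebc" "{b, d} \<subseteq> ebd" "{c, d} \<subseteq> ecd"
  shows "berge_K4 E"
  unfolding berge_K4_def using assms by blast

lemma good_witness_edges_through_pair:
  assumes "\<not> berge_K4 E" "u \<noteq> v" "good_witness E u v x y eux euy evx evy exy"
    and "e \<in> E" "{u, v} \<subseteq> e"
  shows "e \<in> {eux, euy, evx, evy, exy}"
proof (rule ccontr)
  assume "e \<notin> {eux, euy, evx, evy, exy}"
  moreover note witness = assms(3)[unfolded good_witness_def]
  ultimately have "distinct [e, eux, euy, evx, evy, exy]"
    by simp
  moreover have "distinct [u, v, x, y]"
    using witness assms(2) by fastforce
  ultimately have "berge_K4 E"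
    using witness assms(4,5) by (intro berge_K4I[of u v x y e eux euy evx evy exy]) simp_all
  with assms(1) show False ..
qed

lemma not_good_pair_if_deg_le_2_in_common_edge:
  assumes "finite E" "deg E a \<le> 2" "deg E b \<le> 2" "T \<in> E" "a \<in> T" "b \<in> T"
  shows "\<not> good_pair E a b"
proof
  assume "good_pair E a b"
  then obtain x y eax eay ebx eby exy where w: "good_witness E a b x y eax eay ebx eby exy"
    by (auto simp: good_pair_def)
  then have "T = eax \<or> T = eay" "T = ebx \<or> T = eby"
    using edge_through_vertex_of_deg_le_2[OF assms(1,2), of eax eay T]
      edge_through_vertex_of_deg_le_2[OF assms(1,3), of ebx eby T] assms(4-6)
    by (auto simp: good_witness_def)
  with w show False
    by (auto simp: good_witness_def)
qed

lemma good_pair_deg_le_2_edge_has_deg_ge_3_vertex: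
  assumes "finite E" "good_pair E a u" "deg E a \<le> 2" "T \<in> E" "a \<in> T"
  shows "\<exists>w\<in>T. 3 \<le> deg E w"
proof -
  obtain x y eax eay eux euy exy where w: "good_witness E a u x y eax eay eux euy exy"
    using assms(2) by (auto simp: good_pair_def)
  then have "T = eax \<or> T = eay"
    using edge_through_vertex_of_deg_le_2[OF assms(1,3), of eax eay T] assms(4,5)
    by (auto simp: good_witness_def)
  then have "x \<in> T \<or> y \<in> T"
    using w by (auto simp: good_witness_def)
  then show ?thesis
    using good_witness_deg_ge_3[OF assms(1) w] by blast
qed

locale berge_K4_free_3graph =
  fixes V :: "'a set" and E :: "'a set set"
  assumes finite_V: "finite V"
    and uniform: "uniform3 V E"
    and K4_free: "\<not> berge_K4 E"
begin

lemma finite_E: "finite E"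
  using uniform finite_V by (auto simp: uniform3_def intro: finite_subset[of E "Pow V"])

lemma edge_distinct:
  assumes "{a, b, c} \<in> E"
  shows "distinct [a, b, c]"
proof -
  have "card {a, b, c} = 3"
    using assms uniform by (auto simp: uniform3_def)
  then show ?thesis
    by (auto simp: card_insert_if split: if_splits)
qed

lemma codeg_nbhd_subset_if_good_witness:
  assumes "u \<noteq> v" "good_witness E u v x y eux euy evx evy exy"
  shows "codeg_nbhd E u v \<subseteq> {x, y}"
proof
  fix w
  assume "w \<in> codeg_nbhd E u v"
  then have "{u, v, w} \<in> E"
    by (simp add: codeg_nbhd_def)
  then have "{u, v, w} \<in> {eux, euy, evx, evy, exy}"
    using good_witness_edges_through_pair[OF K4_free assms] by simp
  moreover note witness = assms(2)[unfolded good_witness_def]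
  ultimately have "x \<in> {u, v, w} \<or> y \<in> {u, v, w}"
    by blast
  with witness show "w \<in> {x, y}"
    by blast
qed

lemma codeg_le_2_if_good_pair:
  assumes "u \<noteq> v" "good_pair E u v"
  shows "codeg E u v \<le> 2"
proof -
  obtain x y eux euy evx evy exy where "good_witness E u v x y eux euy evx evy exy"
    using assms(2) by (auto simp: good_pair_def)
  then have "card (codeg_nbhd E u v) \<le> card {x, y}"
    using codeg_nbhd_subset_if_good_witness[OF assms(1)] by (intro card_mono) auto
  also have "\<dots> \<le> 2"
    by (simp add: card_insert_if)
  finally show ?thesis
    by (simp add: codeg_def)
qed

lemma deg_ge_3_if_good_pair:
  assumes "u \<noteq> v" "good_pair E u v" "w \<in> codeg_nbhd E u v"
  shows "3 \<le> deg E w"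
proof -
  obtain x y eux euy evx evy exy where w: "good_witness E u v x y eux euy evx evy exy"
    using assms(2) by (auto simp: good_pair_def)
  then have "w = x \<or> w = y"
    using codeg_nbhd_subset_if_good_witness[OF assms(1)] assms(3) by blast
  then show ?thesis
    using good_witness_deg_ge_3[OF finite_E w] by blast
qed

lemma bad_pairs_on_edge:
  assumes T: "{v1, v2, v3} \<in> E" and deg12: "deg E v1 \<le> deg E v2" and deg23: "deg E v2 \<le> deg E v3"
  shows "deg E v1 \<le> 2 \<Longrightarrow> \<not> good_pair E v2 v3"
    and "deg E v2 \<le> 2 \<Longrightarrow> \<not> good_pair E v1 v3"
    and "deg E v2 \<le> 2 \<Longrightarrow> \<not> good_pair E v1 v2"
    and "deg E v2 \<le> 2 \<Longrightarrow> \<not> good_pair E v2 v3"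
    and "deg E v3 \<le> 2 \<Longrightarrow> \<not> good_pair E v1 u"
    and "deg E v3 \<le> 2 \<Longrightarrow> \<not> good_pair E v2 u"
    and "deg E v3 \<le> 2 \<Longrightarrow> \<not> good_pair E v3 u"
proof -
  have "distinct [v1, v2, v3]"
    using T by (rule edge_distinct)
  moreover have "v1 \<in> codeg_nbhd E v2 v3" "v2 \<in> codeg_nbhd E v1 v3"
    using T by (simp_all add: codeg_nbhd_def insert_commute)
  ultimately show "deg E v1 \<le> 2 \<Longrightarrow> \<not> good_pair E v2 v3"
    and "deg E v2 \<le> 2 \<Longrightarrow> \<not> good_pair E v1 v3"
    using deg_ge_3_if_good_pair by fastforce+
  then show "deg E v2 \<le> 2 \<Longrightarrow> \<not> good_pair E v2 v3"
    using deg12 by simp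
  show "\<not> good_pair E v1 v2" if "deg E v2 \<le> 2"
    by (rule not_good_pair_if_deg_le_2_in_common_edge[OF finite_E _ that T])
      (use deg12 that in simp_all)
  have "\<not> good_pair E a u" if "deg E v3 \<le> 2" "a \<in> {v1, v2, v3}" for a
    using good_pair_deg_le_2_edge_has_deg_ge_3_vertex[OF finite_E _ _ T that(2)] that deg12 deg23
    by fastforce
  then show "deg E v3 \<le> 2 \<Longrightarrow> \<not> good_pair E v1 u"
    and "deg E v3 \<le> 2 \<Longrightarrow> \<not> good_pair E v2 u"
    and "deg E v3 \<le> 2 \<Longrightarrow> \<not> good_pair E v3 u"
    by simp_all
qed

end

theorem fact3p1:
  fixes V :: "'a set" and E :: "'a set set"
  assumes "finite V" and "card V \<ge> 5" and "berge_K4_saturated V E"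
  shows "(\<forall>u\<in>V. \<forall>v\<in>V. u \<noteq> v \<and> good_pair E u v \<longrightarrow>
            (\<forall>x y eux euy evx evy exy. good_witness E u v x y eux euy evx evy exy \<longrightarrow>
               (\<forall>e\<in>E. {u, v} \<subseteq> e \<longrightarrow> e \<in> {eux, euy, evx, evy, exy})) \<and>
            codeg E u v \<le> 2 \<and>
            (\<forall>w\<in>codeg_nbhd E u v. deg E w \<ge> 3))
       \<and> (\<forall>v1 v2 v3. {v1, v2, v3} \<in> E \<and> deg E v1 \<le> deg E v2 \<and> deg E v2 \<le> deg E v3 \<longrightarrow>
            (deg E v1 \<le> 2 \<longrightarrow> \<not> good_pair E v2 v3) \<and>
            (deg E v2 \<le> 2 \<longrightarrow> \<not> good_pair E v1 v2 \<and> \<not> good_pair E v1 v3 \<and> \<not> good_pair E v2 v3) \<and>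
            (deg E v3 \<le> 2 \<longrightarrow> (\<forall>u \<in> V - {v1, v2, v3}.
               \<not> good_pair E v1 u \<and> \<not> good_pair E v2 u \<and> \<not> good_pair E v3 u)))"
proof -
  interpret berge_K4_free_3graph V E
    using assms(1,3) by unfold_locales (auto simp: berge_K4_saturated_def)
  show ?thesis
    by (intro conjI ballI allI impI; (elim conjE)?)
      (rule good_witness_edges_through_pair[OF K4_free] codeg_le_2_if_good_pair
        deg_ge_3_if_good_pair bad_pairs_on_edge; assumption)+
qed

end
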